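(* Let $n \geq 2$ and $d \geq 2$ be integers, let $k$ be a positive integer, and let $\mathcal{X} \subseteq \mathbb{R}^k$. Let $\mathcal{S}_n^d$ denote the collection of all sets $\{v_1, \ldots, v_n\}$ consisting of $n$ vectors $v_i \in \mathbb{R}^d$. Suppose $g\colon \mathcal{S}_n^d \to \mathcal{X}$ is continuous, where $\mathcal{S}_n^d$ is equipped with the symmetric Chamfer distance and $\mathcal{X}$ with the Euclidean distance. Let $h\colon \mathcal{X} \to \mathbb{R}^{n \times d}$ be a function such that for every $V = \{v_1, \ldots, v_n\} \in \mathcal{S}_n^d$ there exists a permutation $\sigma$ of $\{1, \ldots, n\}$ with $$h(g(\{v_1, \ldots, v_n\})) = [v_{\sigma(1)}, v_{\sigma(2)}, \ldots, v_{\sigma(n)}],$$ i.e. the matrix whose $i$-th row is $v_{\sigma(i)}$. Then $h$ is discontinuous (with respect to the Euclidean distances on $\mathcal{X}$ and on $\mathbb{R}^{n\times d}$).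
   Context: The symmetric Chamfer distance between two sets $A, B \in \mathcal{S}_n^d$ is $d_{\mathrm{Ch}}(A,B) = \sum_{a \in A} \min_{b \in B} \|a - b\|_2^2 + \sum_{b \in B} \min_{a \in A} \|a - b\|_2^2$. Elements of $\mathcal{S}_n^d$ are unordered, while elements of $\mathbb{R}^{n \times d}$ are ordered lists of $n$ vectors in $\mathbb{R}^d$. *)

theory Defs
  imports "HOL-Analysis.Analysis"
begin

definition set_space :: "nat \<Rightarrow> (real^'d) set set" where
  "set_space n = {V. finite V \<and> card V = n}"

definition chamfer :: "(real^'d) set \<Rightarrow> (real^'d) set \<Rightarrow> real" where
  "chamfer A B =
     (\<Sum>a\<in>A. Min ((\<lambda>b. (norm (a - b))\<^sup>2) ` B)) + (\<Sum>b\<in>B. Min ((\<lambda>a. (norm (a - b))\<^sup>2) ` A))"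

definition chamfer_continuous_on :: "(real^'d) set set \<Rightarrow> ((real^'d) set \<Rightarrow> 'b::metric_space) \<Rightarrow> bool" where
  "chamfer_continuous_on S g \<longleftrightarrow>
     (\<forall>V\<in>S. \<forall>e>0. \<exists>\<delta>>0. \<forall>W\<in>S. chamfer W V < \<delta> \<longrightarrow> dist (g W) (g V) < e)"

end

(* Rotate two antipodal unit vectors x(t), -x(t) by a half-turn in a coordinate plane and keep
   the other n - 2 points fixed far away. At t = pi the configuration is the same set as at t = 0,
   with the two moving points swapped. If h were continuous, the rows of h (g (configuration at t))
   would depend continuously on t; since every other point of the configuration stays at distance
   at least 1 from x(t), the row starting at x(0) must follow x(t) and end at x(pi) = -x(0). But
   the set, and hence the matrix, at t = pi is the one at t = 0. *)

theory Submission
  imports Defs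
begin

lemma chamfer_range_le:
  fixes u w :: "'n::finite \<Rightarrow> real^'d"
  shows "chamfer (range u) (range w) \<le> 2 * (\<Sum>i\<in>UNIV. (norm (u i - w i))\<^sup>2)"
proof -
  have "(\<Sum>a\<in>range u. Min ((\<lambda>b. (norm (a - b))\<^sup>2) ` range w))
        \<le> (\<Sum>i\<in>UNIV. Min ((\<lambda>b. (norm (u i - b))\<^sup>2) ` range w))"
    using sum_image_le[of UNIV "\<lambda>a. Min ((\<lambda>b. (norm (a - b))\<^sup>2) ` range w)" u]
    by (simp add: comp_def)
  also have "\<dots> \<le> (\<Sum>i\<in>UNIV. (norm (u i - w i))\<^sup>2)"
    by (intro sum_mono Min_le) auto
  finally have left: "(\<Sum>a\<in>range u. Min ((\<lambda>b. (norm (a - b))\<^sup>2) ` range w))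
        \<le> (\<Sum>i\<in>UNIV. (norm (u i - w i))\<^sup>2)" .
  have "(\<Sum>b\<in>range w. Min ((\<lambda>a. (norm (a - b))\<^sup>2) ` range u))
        \<le> (\<Sum>i\<in>UNIV. Min ((\<lambda>a. (norm (a - w i))\<^sup>2) ` range u))"
    using sum_image_le[of UNIV "\<lambda>b. Min ((\<lambda>a. (norm (a - b))\<^sup>2) ` range u)" w]
    by (simp add: comp_def)
  also have "\<dots> \<le> (\<Sum>i\<in>UNIV. (norm (u i - w i))\<^sup>2)"
    by (intro sum_mono Min_le) auto
  finally show ?thesis
    using left unfolding chamfer_def by linarith
qed

lemma range_in_set_space:
  fixes v :: "'n::finite \<Rightarrow> real^'d"
  assumes "inj v"
  shows "range v \<in> set_space CARD('n)"
  using assms by (simp add: set_space_def card_image)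

lemma chamfer_continuous_on_compose:
  fixes g :: "(real^'d) set \<Rightarrow> 'b::metric_space"
    and u :: "'a::topological_space \<Rightarrow> 'n::finite \<Rightarrow> real^'d"
  assumes g: "chamfer_continuous_on (set_space CARD('n)) g"
    and inj: "\<And>t. t \<in> S \<Longrightarrow> inj (u t)"
    and cont: "\<And>i. continuous_on S (\<lambda>t. u t i)"
  shows "continuous_on S (\<lambda>t. g (range (u t)))"
  unfolding continuous_on_def
proof (intro ballI tendstoI)
  fix t and e :: real
  assume "t \<in> S" "0 < e"
  obtain \<delta> where "0 < \<delta>"
    and \<delta>: "\<And>W. W \<in> set_space CARD('n) \<Longrightarrow> chamfer W (range (u t)) < \<delta>
                 \<Longrightarrow> dist (g W) (g (range (u t))) < e"
    using g range_in_set_space[OF inj[OF \<open>t \<in> S\<close>]] \<open>0 < e\<close> unfolding chamfer_continuous_on_def by meson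
  have "((\<lambda>s. \<Sum>i\<in>UNIV. (norm (u s i - u t i))\<^sup>2) \<longlongrightarrow> (\<Sum>i\<in>UNIV. (norm (u t i - u t i))\<^sup>2))
          (at t within S)"
    using cont \<open>t \<in> S\<close> unfolding continuous_on_def by (intro tendsto_intros) auto
  then have "\<forall>\<^sub>F s in at t within S. (\<Sum>i\<in>UNIV. (norm (u s i - u t i))\<^sup>2) < \<delta> / 2"
    using \<open>0 < \<delta>\<close> by (intro order_tendstoD(2)) auto
  moreover have "\<forall>\<^sub>F s in at t within S. s \<in> S"
    by (simp add: eventually_at_filter)
  ultimately show "\<forall>\<^sub>F s in at t within S. dist (g (range (u s))) (g (range (u t))) < e"
  proof eventually_elim
    case (elim s)
    then show ?case
      using chamfer_range_le[of "u s" "u t"] by (intro \<delta> range_in_set_space inj) auto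
  qed
qed

lemma connected_continuous_selection_eq:
  fixes p b :: "'a::topological_space \<Rightarrow> 'b::metric_space"
  assumes "connected S" "continuous_on S p" "continuous_on S b" "0 < c"
    and gap: "\<And>t. t \<in> S \<Longrightarrow> p t = b t \<or> c \<le> dist (p t) (b t)"
    and "s \<in> S" "p s = b s" "t \<in> S"
  shows "p t = b t"
proof (rule ccontr)
  assume "p t \<noteq> b t"
  define f where "f u = dist (p u) (b u)" for u
  have "connected (f ` S)"
    using assms(1-3) unfolding f_def by (intro connected_continuous_image continuous_intros)
  moreover have "0 \<in> f ` S"
    using assms(6,7) by (force simp: f_def)
  moreover have "f t \<in> f ` S"
    using \<open>t \<in> S\<close> by simp
  moreover have "c \<le> f t"
    using gap[OF \<open>t \<in> S\<close>] \<open>p t \<noteq> b t\<close> by (simp add: f_def)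
  ultimately have "c / 2 \<in> f ` S"
    using \<open>0 < c\<close> connectedD_interval[of "f ` S" 0 "f t" "c / 2"] by linarith
  then obtain u where "u \<in> S" "dist (p u) (b u) = c / 2"
    by (auto simp: f_def)
  then show False
    using gap[of u] \<open>0 < c\<close> by auto
qed

lemma exists_unit_path_to_antipode:
  assumes "2 \<le> DIM('a)"
  obtains a :: "real \<Rightarrow> 'a::euclidean_space"
  where "continuous_on UNIV a" "\<And>t. norm (a t) = 1" "a pi = - a 0"
proof -
  obtain x y :: 'a where "x \<in> Basis" "y \<in> Basis" "x \<noteq> y"
  proof -
    have "\<not> card (Basis :: 'a set) \<le> Suc 0"
      using assms by simp
    then show ?thesis
      using that by (auto simp: card_le_Suc0_iff_eq)
  qed
  then have "inner x y = 0" "inner x x = 1" "inner y y = 1"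
    by (auto simp: inner_not_same_Basis)
  define a where "a t = cos t *\<^sub>R x + sin t *\<^sub>R y" for t
  have "inner (a t) (a t) = 1" for t
    using \<open>inner x y = 0\<close> \<open>inner x x = 1\<close> \<open>inner y y = 1\<close>
    by (simp add: a_def inner_add_left inner_add_right inner_commute flip: power2_eq_square)
  then have "norm (a t) = 1" for t
    by (simp add: norm_eq_sqrt_inner)
  moreover have "continuous_on UNIV a"
    unfolding a_def by (intro continuous_intros)
  moreover have "a pi = - a 0"
    by (simp add: a_def)
  ultimately show ?thesis
    using that by blast
qed

lemma exists_inj_norm_ge:
  fixes r :: real
  obtains w :: "'n::finite \<Rightarrow> 'a::euclidean_space" where "inj w" "\<And>m. r \<le> norm (w m)"
proof -
  obtain f :: "'n \<Rightarrow> nat" where "inj f"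
    using finite_imp_inj_to_nat_seg[of "UNIV :: 'n set"] by auto
  obtain b :: 'a where "b \<in> Basis"
    using nonempty_Basis by blast
  define w where "w m = (\<bar>r\<bar> + real (f m)) *\<^sub>R b" for m
  have "inj w"
    using \<open>inj f\<close> \<open>b \<in> Basis\<close> by (auto simp: w_def inj_def scaleR_cancel_right nonzero_Basis)
  moreover have "r \<le> norm (w m)" for m
    using \<open>b \<in> Basis\<close> by (simp add: w_def)
  ultimately show ?thesis
    using that by blast
qed

lemma eq_neg_self_iff:
  fixes x :: "'a::real_vector"
  shows "x = - x \<longleftrightarrow> x = 0"
  by (simp add: eq_neg_iff_add_eq_0 flip: scaleR_2)

lemma inj_fun_upd_antipodal:
  fixes w :: "'n \<Rightarrow> 'a::real_normed_vector"
  assumes "inj w" "\<And>m. 2 * norm x \<le> norm (w m)" "x \<noteq> 0" "i \<noteq> j"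
  shows "inj (w(i := x, j := - x))"
proof -
  have "norm x < norm (w m)" for m
    using assms(2)[of m] zero_less_norm_iff[of x] \<open>x \<noteq> 0\<close> by linarith
  then have "x \<notin> range w" "- x \<notin> range w"
    by (metis imageE less_irrefl norm_minus_cancel)+
  moreover have "x \<noteq> - x"
    using \<open>x \<noteq> 0\<close> by (simp add: eq_neg_self_iff)
  ultimately show ?thesis
    using \<open>inj w\<close> \<open>i \<noteq> j\<close> unfolding inj_def by (metis fun_upd_apply rangeI)
qed

lemma dist_fun_upd_antipodal_ge:
  fixes w :: "'n \<Rightarrow> 'a::real_normed_vector"
  assumes "\<And>m. 2 * norm x \<le> norm (w m)"
  shows "(w(i := x, j := - x)) m = x \<or> norm x \<le> dist ((w(i := x, j := - x)) m) x"
proof -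
  have "norm x \<le> dist (w m) x"
    using assms[of m] norm_triangle_ineq2[of "w m" x] by (simp add: dist_norm)
  moreover have "- x - x = - (2 *\<^sub>R x)"
    by (simp add: scaleR_2)
  then have "norm x \<le> dist (- x) x"
    by (simp add: dist_norm)
  ultimately show ?thesis
    by auto
qed

lemma range_fun_upd_swap:
  assumes "i \<noteq> j"
  shows "range (f(i := x, j := y)) = range (f(i := y, j := x))"
proof -
  have "f(i := y, j := x) = f(i := x, j := y) \<circ> Transposition.transpose i j"
    using assms by (auto simp: Transposition.transpose_def)
  then show ?thesis
    by (metis image_comp surj_transpose)
qed

lemma exists_configuration_loop_with_monodromy:
  assumes "2 \<le> CARD('n)" "2 \<le> DIM('a)"
  obtains v :: "real \<Rightarrow> 'n::finite \<Rightarrow> 'a::euclidean_space" and i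
  where "\<And>t. inj (v t)" "\<And>m. continuous_on UNIV (\<lambda>t. v t m)"
    and "range (v pi) = range (v 0)" "v pi i \<noteq> v 0 i"
    and "\<And>t x. x \<in> range (v t) \<Longrightarrow> x = v t i \<or> 1 \<le> dist x (v t i)"
proof -
  obtain a :: "real \<Rightarrow> 'a" where a_cont: "continuous_on UNIV a"
    and a_norm: "\<And>t. norm (a t) = 1" and a_pi: "a pi = - a 0"
    using exists_unit_path_to_antipode assms(2) by blast
  obtain i j :: 'n where "i \<noteq> j"
    using assms(1) card_le_Suc0_iff_eq[of "UNIV :: 'n set"] by auto
  obtain w :: "'n \<Rightarrow> 'a" where "inj w" and w_norm: "\<And>m. 2 \<le> norm (w m)"
    using exists_inj_norm_ge by blast
  define v where "v t = w(i := a t, j := - a t)" for t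
  have "a t \<noteq> 0" for t
    using a_norm[of t] by auto
  then have "inj (v t)" for t
    unfolding v_def using \<open>inj w\<close> \<open>i \<noteq> j\<close>
    by (intro inj_fun_upd_antipodal) (simp_all add: a_norm w_norm)
  moreover have "continuous_on UNIV (\<lambda>t. v t m)" for m
    using a_cont by (cases "m = j"; cases "m = i") (auto simp: v_def intro: continuous_on_minus)
  moreover have "range (v pi) = range (v 0)"
    unfolding v_def a_pi minus_minus by (rule range_fun_upd_swap[OF \<open>i \<noteq> j\<close>])
  moreover have "v pi i \<noteq> v 0 i"
    using \<open>i \<noteq> j\<close> a_pi \<open>a 0 \<noteq> 0\<close> eq_neg_self_iff[of "a 0"] by (auto simp: v_def)
  moreover have "x = v t i \<or> 1 \<le> dist x (v t i)" if x: "x \<in> range (v t)" for x t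
  proof -
    obtain m where "x = v t m"
      using x by blast
    then show ?thesis
      using dist_fun_upd_antipodal_ge[of "a t" w i j m, folded v_def] \<open>i \<noteq> j\<close> a_norm w_norm
      by (simp add: v_def)
  qed
  ultimately show ?thesis
    using that by blast
qed

theorem theorem1:
  fixes X :: "(real^'k) set"
    and g :: "(real^'d) set \<Rightarrow> real^'k"
    and h :: "real^'k \<Rightarrow> real^'d^'n"
  assumes n2: "CARD('n) \<ge> 2"
    and d2: "CARD('d) \<ge> 2"
    and g_into: "g ` set_space CARD('n) \<subseteq> X"
    and g_cont: "chamfer_continuous_on (set_space CARD('n)) g"
    and h_perm: "\<forall>v :: 'n \<Rightarrow> real^'d. inj v \<longrightarrow>
                   (\<exists>\<sigma>. \<sigma> permutes (UNIV :: 'n set) \<and>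
                        (\<forall>i. h (g (range v)) $ i = v (\<sigma> i)))"
  shows "\<not> continuous_on X h"
proof
  assume "continuous_on X h"
  obtain v :: "real \<Rightarrow> 'n \<Rightarrow> real^'d" and i where inj: "\<And>t. inj (v t)"
    and cont: "\<And>m. continuous_on UNIV (\<lambda>t. v t m)"
    and loop: "range (v pi) = range (v 0)" and moved: "v pi i \<noteq> v 0 i"
    and separated: "\<And>t x. x \<in> range (v t) \<Longrightarrow> x = v t i \<or> 1 \<le> dist x (v t i)"
    using exists_configuration_loop_with_monodromy[where 'a = "real^'d"] n2 d2 by auto
  define F where "F t = h (g (range (v t)))" for t
  have "continuous_on UNIV (\<lambda>t. g (range (v t)))"
    using g_cont inj cont by (rule chamfer_continuous_on_compose)
  moreover have "range (\<lambda>t. g (range (v t))) \<subseteq> X"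
    using g_into range_in_set_space[OF inj] by blast
  ultimately have F_cont: "continuous_on UNIV F"
    unfolding F_def by (rule continuous_on_compose2[OF \<open>continuous_on X h\<close>])
  have rows: "F t $ m \<in> range (v t)" for t m
    using h_perm inj[of t] unfolding F_def by blast
  obtain k where "F 0 $ k = v 0 i"
    using h_perm inj[of 0] unfolding F_def by (metis permutes_inverses(1))
  have "F pi $ k = v pi i"
    by (rule connected_continuous_selection_eq[where S = UNIV and p = "\<lambda>t. F t $ k"
          and b = "\<lambda>t. v t i" and c = 1 and s = 0 and t = pi])
      (use F_cont cont separated[OF rows] \<open>F 0 $ k = v 0 i\<close>
        in \<open>auto intro: continuous_on_component\<close>)
  moreover have "F pi = F 0"
    using loop by (simp add: F_def)
  ultimately show False
    using moved \<open>F 0 $ k = v 0 i\<close> by simp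
qed

end
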